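(* In the setting below with $R_1=R$ and $R_2=R^c$, regard $G$ and $\Phi$ as fixed and parametrize by $b_R=b_{R_1}$ and $m_R=b_RG_R/G$ (where $G_R=G_{R_1}$). Then the log-likelihood ratio statistic $\Delta$ satisfies $\Delta=\frac{G}{\Phi}\,E(m_R,b_R)+c$, where $c$ is a constant not depending on $R$ and $$E(m_R,b_R)=m_R\,g_e\!\Big(G\tfrac{m_R}{b_R}\Big)-\tfrac{b_R}{G}B_e\!\Big(g_e\!\Big(G\tfrac{m_R}{b_R}\Big)\Big)+(1-m_R)\,g_e\!\Big(G\tfrac{1-m_R}{1-b_R}\Big)-\tfrac{1-b_R}{G}B_e\!\Big(g_e\!\Big(G\tfrac{1-m_R}{1-b_R}\Big)\Big).$$ That is, the discrepancy measure $d(m_R,b_R)$ (ignoring additive constants) satisfies $d(m_R,b_R)\frac{\Phi}{G}=E(m_R,b_R)$.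
   Context: A random variable $y$ belongs to $\mathrm{1EXP}(\eta,\phi,T,B_e,a)$ if it has density $C(y,\phi)\exp((\eta T(y)-B_e(\eta))/a(\phi))$ with $T$ measurable, $\phi>0$ known, $B_e$ strictly convex, and support independent of $\eta$; $g_e=(B_e')^{-1}$. For independent $y_i\sim\mathrm{1EXP}(\eta,\phi_i,T,B_e,a)$, $i\in S$, let $1/\phi^*=\sum_{i\in S}1/a(\phi_i)$ and $T^*(\mathbf{y})=\sum_{i\in S}(\phi^*/a(\phi_i))T(y_i)$. Setting: for $j=1,2$, $\mathbf{y}_{R_j}=(y_{R_ji}:i\in R_j)$ are mutually independent with $y_{R_ji}\sim\mathrm{1EXP}(\eta_{R_j},\phi_{R_ji},T,B_e,a)$. Let $\kappa(x,y)=(x g_e(x)-B_e(g_e(x)))/y$, $G_{R_j}=T^*(\mathbf{y}_{R_j})$, $1/\Phi_{R_j}=\sum_{i\in R_j}1/a(\phi_{R_ji})$, $1/\Phi=1/\Phi_{R_1}+1/\Phi_{R_2}$, $b_{R_1}=\frac{1/\Phi_{R_1}}{1/\Phi_{R_1}+1/\Phi_{R_2}}$, $G=b_{R_1}G_{R_1}+(1-b_{R_1})G_{R_2}$, and the log-likelihood ratio statistic for $H_0:\eta_{R_1}=\eta_{R_2}$ vs $H_1:\eta_{R_1}\ne\eta_{R_2}$ is $\Delta=\kappa(G_{R_1},\Phi_{R_1})+\kappa(G_{R_2},\Phi_{R_2})-\kappa(G,\Phi)$. *)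

theory Defs
  imports "HOL-Analysis.Analysis"
begin

definition strictly_convex :: "(real \<Rightarrow> real) \<Rightarrow> bool" where
  "strictly_convex f \<longleftrightarrow>
     (\<forall>x y t. x \<noteq> y \<and> 0 < t \<and> t < 1 \<longrightarrow>
        f ((1 - t) * x + t * y) < (1 - t) * f x + t * f y)"

definition PhiS :: "(real \<Rightarrow> real) \<Rightarrow> ('i \<Rightarrow> real) \<Rightarrow> 'i set \<Rightarrow> real" where
  "PhiS a phi S = 1 / (\<Sum>i\<in>S. 1 / a (phi i))"

definition Tstar :: "(real \<Rightarrow> real) \<Rightarrow> ('i \<Rightarrow> real) \<Rightarrow> ('y \<Rightarrow> real) \<Rightarrow> ('i \<Rightarrow> 'y)
    \<Rightarrow> 'i set \<Rightarrow> real" where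
  "Tstar a phi T y S = (\<Sum>i\<in>S. (PhiS a phi S / a (phi i)) * T (y i))"

definition kappa :: "(real \<Rightarrow> real) \<Rightarrow> (real \<Rightarrow> real) \<Rightarrow> real \<Rightarrow> real \<Rightarrow> real" where
  "kappa B g x z = (x * g x - B (g x)) / z"

definition bR :: "(real \<Rightarrow> real) \<Rightarrow> ('i \<Rightarrow> real) \<Rightarrow> 'i set \<Rightarrow> 'i set \<Rightarrow> real" where
  "bR a phi R1 R2 =
     (1 / PhiS a phi R1) / (1 / PhiS a phi R1 + 1 / PhiS a phi R2)"

definition PhiTot :: "(real \<Rightarrow> real) \<Rightarrow> ('i \<Rightarrow> real) \<Rightarrow> 'i set \<Rightarrow> 'i set \<Rightarrow> real" where
  "PhiTot a phi R1 R2 = 1 / (1 / PhiS a phi R1 + 1 / PhiS a phi R2)"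

definition GTot :: "(real \<Rightarrow> real) \<Rightarrow> ('i \<Rightarrow> real) \<Rightarrow> ('y \<Rightarrow> real) \<Rightarrow> ('i \<Rightarrow> 'y)
    \<Rightarrow> 'i set \<Rightarrow> 'i set \<Rightarrow> real" where
  "GTot a phi T y R1 R2 =
     bR a phi R1 R2 * Tstar a phi T y R1 + (1 - bR a phi R1 R2) * Tstar a phi T y R2"

definition LLR :: "(real \<Rightarrow> real) \<Rightarrow> (real \<Rightarrow> real) \<Rightarrow> (real \<Rightarrow> real) \<Rightarrow> ('i \<Rightarrow> real)
    \<Rightarrow> ('y \<Rightarrow> real) \<Rightarrow> ('i \<Rightarrow> 'y) \<Rightarrow> 'i set \<Rightarrow> 'i set \<Rightarrow> real" where
  "LLR B g a phi T y R1 R2 =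
     kappa B g (Tstar a phi T y R1) (PhiS a phi R1)
   + kappa B g (Tstar a phi T y R2) (PhiS a phi R2)
   - kappa B g (GTot a phi T y R1 R2) (PhiTot a phi R1 R2)"

definition mR :: "(real \<Rightarrow> real) \<Rightarrow> ('i \<Rightarrow> real) \<Rightarrow> ('y \<Rightarrow> real) \<Rightarrow> ('i \<Rightarrow> 'y)
    \<Rightarrow> 'i set \<Rightarrow> 'i set \<Rightarrow> real" where
  "mR a phi T y R1 R2 =
     bR a phi R1 R2 * Tstar a phi T y R1 / GTot a phi T y R1 R2"

definition Efun :: "(real \<Rightarrow> real) \<Rightarrow> (real \<Rightarrow> real) \<Rightarrow> real \<Rightarrow> real \<Rightarrow> real \<Rightarrow> real" where
  "Efun B g G m b =
     m * g (G * (m / b)) - (b / G) * B (g (G * (m / b)))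
   + (1 - m) * g (G * ((1 - m) / (1 - b))) - ((1 - b) / G) * B (g (G * ((1 - m) / (1 - b))))"

end

theory Submission
  imports Defs
begin

text \<open>
  The identity is purely algebraic. Precisions \<open>1/\<Phi>\<^sub>S\<close> add when disjoint groups are pooled,
  so \<open>\<Phi>\<close> and \<open>G\<close> are the dispersion and statistic \<open>T\<^sup>*\<close> of the whole index set \<open>I\<close>, and
  \<open>c = -\<kappa>(G, \<Phi>)\<close> does not depend on \<open>R\<close>. Since \<open>\<Phi>/b\<^sub>R = \<Phi>\<^sub>R\<close> and \<open>G m\<^sub>R/b\<^sub>R = G\<^sub>R\<close>
  (and likewise for the complement), the two halves of \<open>(G/\<Phi>) E(m\<^sub>R, b\<^sub>R)\<close> are exactly
  the two group terms \<open>\<kappa>(G\<^sub>R, \<Phi>\<^sub>R)\<close> and \<open>\<kappa>(G\<^bsub>I-R\<^esub>, \<Phi>\<^bsub>I-R\<^esub>)\<close> of \<open>\<Delta>\<close>.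
\<close>

lemma kappa_div: "kappa B g x (Phi / b) = b * (x * g x - B (g x)) / Phi"
  unfolding kappa_def by simp

lemma Efun_eq_kappa_sum:
  assumes "G \<noteq> 0" and "b \<noteq> 0" and "b \<noteq> 1"
  shows "G / Phi * Efun B g G m b =
           kappa B g (G * (m / b)) (Phi / b) + kappa B g (G * ((1 - m) / (1 - b))) (Phi / (1 - b))"
proof -
  define x1 where "x1 = G * (m / b)"
  define x2 where "x2 = G * ((1 - m) / (1 - b))"
  have half: "G * (n * u - c / G * v) = c * (G * (n / c) * u - v)" if "c \<noteq> 0" for n c u v
    using that assms(1) by (simp add: field_simps)
  have "1 - b \<noteq> 0" using assms(3) by simp
  have "G * Efun B g G m b
      = G * (m * g x1 - b / G * B (g x1)) + G * ((1 - m) * g x2 - (1 - b) / G * B (g x2))"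
    unfolding Efun_def x1_def[symmetric] x2_def[symmetric] by (simp add: algebra_simps)
  also have "\<dots> = b * (x1 * g x1 - B (g x1)) + (1 - b) * (x2 * g x2 - B (g x2))"
    by (simp only: half[OF assms(2)] half[OF \<open>1 - b \<noteq> 0\<close>] x1_def x2_def)
  finally show ?thesis
    unfolding kappa_div x1_def[symmetric] x2_def[symmetric] by (simp add: add_divide_distrib)
qed

lemma inverse_PhiS: "1 / PhiS a phi S = (\<Sum>i\<in>S. 1 / a (phi i))"
  unfolding PhiS_def by simp

lemma PhiS_pos:
  assumes "finite S" and "S \<noteq> {}" and "\<And>i. i \<in> S \<Longrightarrow> a (phi i) > 0"
  shows "PhiS a phi S > 0"
  unfolding PhiS_def using assms by (simp add: sum_pos)

lemma Tstar_eq_sum_divide_sum: "Tstar a phi T y S = (\<Sum>i\<in>S. T (y i) / a (phi i)) / (\<Sum>i\<in>S. 1 / a (phi i))"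
  unfolding Tstar_def PhiS_def by (simp add: sum_divide_distrib mult.commute)

lemma PhiTot_Un:
  assumes "finite R1" and "finite R2" and "R1 \<inter> R2 = {}"
  shows "PhiTot a phi R1 R2 = PhiS a phi (R1 \<union> R2)"
  unfolding PhiTot_def inverse_PhiS PhiS_def using assms by (simp add: sum.union_disjoint)

lemma GTot_Un:
  assumes "finite R1" and "finite R2" and "R1 \<inter> R2 = {}"
    and "PhiS a phi R1 > 0" and "PhiS a phi R2 > 0"
  shows "GTot a phi T y R1 R2 = Tstar a phi T y (R1 \<union> R2)"
proof -
  define p1 where "p1 = (\<Sum>i\<in>R1. 1 / a (phi i))"
  define p2 where "p2 = (\<Sum>i\<in>R2. 1 / a (phi i))"
  define t1 where "t1 = (\<Sum>i\<in>R1. T (y i) / a (phi i))"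
  define t2 where "t2 = (\<Sum>i\<in>R2. T (y i) / a (phi i))"
  have "p1 > 0" "p2 > 0"
    using assms(4,5) by (simp_all add: p1_def p2_def PhiS_def)
  have "bR a phi R1 R2 = p1 / (p1 + p2)"
    unfolding bR_def inverse_PhiS p1_def p2_def ..
  then have "GTot a phi T y R1 R2 = p1 / (p1 + p2) * (t1 / p1) + (1 - p1 / (p1 + p2)) * (t2 / p2)"
    unfolding GTot_def Tstar_eq_sum_divide_sum p1_def p2_def t1_def t2_def by simp
  also have "\<dots> = (t1 + t2) / (p1 + p2)"
  proof -
    have "p1 + p2 \<noteq> 0" using \<open>p1 > 0\<close> \<open>p2 > 0\<close> by simp
    then have "p1 / (p1 + p2) * (t1 / p1) = t1 / (p1 + p2)"
      and "(1 - p1 / (p1 + p2)) * (t2 / p2) = t2 / (p1 + p2)"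
      using \<open>p1 > 0\<close> \<open>p2 > 0\<close> by (simp_all add: field_simps)
    then show ?thesis by (simp add: add_divide_distrib)
  qed
  also have "\<dots> = Tstar a phi T y (R1 \<union> R2)"
    using assms(1-3) by (simp add: Tstar_eq_sum_divide_sum sum.union_disjoint p1_def p2_def t1_def t2_def)
  finally show ?thesis .
qed

lemma bR_bounds:
  assumes "PhiS a phi R1 > 0" and "PhiS a phi R2 > 0"
  shows "0 < bR a phi R1 R2" and "bR a phi R1 R2 < 1"
  unfolding bR_def using assms by (simp_all add: field_simps)

lemma PhiTot_div_bR:
  assumes "PhiS a phi R1 > 0" and "PhiS a phi R2 > 0"
  shows "PhiTot a phi R1 R2 / bR a phi R1 R2 = PhiS a phi R1"
  unfolding PhiTot_def bR_def using assms by (simp add: divide_simps)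

lemma PhiTot_div_one_minus_bR:
  assumes "PhiS a phi R1 > 0" and "PhiS a phi R2 > 0"
  shows "PhiTot a phi R1 R2 / (1 - bR a phi R1 R2) = PhiS a phi R2"
  unfolding PhiTot_def bR_def using assms by (simp add: divide_simps)

lemma GTot_mult_mR_div_bR:
  assumes "GTot a phi T y R1 R2 \<noteq> 0" and "bR a phi R1 R2 \<noteq> 0"
  shows "GTot a phi T y R1 R2 * (mR a phi T y R1 R2 / bR a phi R1 R2) = Tstar a phi T y R1"
  unfolding mR_def using assms by simp

lemma GTot_mult_one_minus_mR_div:
  assumes "GTot a phi T y R1 R2 \<noteq> 0" and "bR a phi R1 R2 \<noteq> 1"
  shows "GTot a phi T y R1 R2 * ((1 - mR a phi T y R1 R2) / (1 - bR a phi R1 R2))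
           = Tstar a phi T y R2"
proof -
  have "GTot a phi T y R1 R2 * (1 - mR a phi T y R1 R2) = (1 - bR a phi R1 R2) * Tstar a phi T y R2"
    using assms(1) unfolding mR_def by (simp add: right_diff_distrib GTot_def)
  moreover have "1 - bR a phi R1 R2 \<noteq> 0" using assms(2) by simp
  ultimately show ?thesis by (metis nonzero_mult_div_cancel_left times_divide_eq_right)
qed

lemma LLR_eq_Efun_minus_kappa:
  assumes "PhiS a phi R1 > 0" and "PhiS a phi R2 > 0" and "GTot a phi T y R1 R2 \<noteq> 0"
  shows "LLR B g a phi T y R1 R2 =
           GTot a phi T y R1 R2 / PhiTot a phi R1 R2
             * Efun B g (GTot a phi T y R1 R2) (mR a phi T y R1 R2) (bR a phi R1 R2)
           - kappa B g (GTot a phi T y R1 R2) (PhiTot a phi R1 R2)"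
proof -
  have b: "bR a phi R1 R2 \<noteq> 0" "bR a phi R1 R2 \<noteq> 1"
    using bR_bounds[OF assms(1,2)] by simp_all
  have "GTot a phi T y R1 R2 / PhiTot a phi R1 R2
          * Efun B g (GTot a phi T y R1 R2) (mR a phi T y R1 R2) (bR a phi R1 R2)
      = kappa B g (Tstar a phi T y R1) (PhiS a phi R1) + kappa B g (Tstar a phi T y R2) (PhiS a phi R2)"
    by (simp only: Efun_eq_kappa_sum[OF assms(3) b]
                   GTot_mult_mR_div_bR[OF assms(3) b(1)] GTot_mult_one_minus_mR_div[OF assms(3) b(2)]
                   PhiTot_div_bR[OF assms(1,2)] PhiTot_div_one_minus_bR[OF assms(1,2)])
  then show ?thesis unfolding LLR_def by simp
qed

theorem theorem6p3:
  fixes B g a :: "real \<Rightarrow> real"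
    and I :: "'i set" and phi :: "'i \<Rightarrow> real"
    and T :: "'y \<Rightarrow> real" and y :: "'i \<Rightarrow> 'y"
  assumes "strictly_convex B"
    and "\<And>x. B differentiable (at x)"
    and "\<And>x. g (deriv B x) = x"
    and "finite I"
    and "\<And>i. i \<in> I \<Longrightarrow> phi i > 0"
    and "\<And>i. i \<in> I \<Longrightarrow> a (phi i) > 0"
  shows "\<exists>c::real. \<forall>R. R \<subseteq> I \<and> R \<noteq> {} \<and> I - R \<noteq> {} \<and> GTot a phi T y R (I - R) \<noteq> 0 \<longrightarrow>
           LLR B g a phi T y R (I - R) =
             GTot a phi T y R (I - R) / PhiTot a phi R (I - R)
               * Efun B g (GTot a phi T y R (I - R)) (mR a phi T y R (I - R)) (bR a phi R (I - R))
             + c"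
proof (intro exI allI impI)
  fix R
  assume R: "R \<subseteq> I \<and> R \<noteq> {} \<and> I - R \<noteq> {} \<and> GTot a phi T y R (I - R) \<noteq> 0"
  have fin: "finite R" "finite (I - R)" and Un: "R \<union> (I - R) = I"
    using R assms(4) finite_subset by auto
  have G0: "GTot a phi T y R (I - R) \<noteq> 0"
    using R by simp
  have pos: "PhiS a phi R > 0" "PhiS a phi (I - R) > 0"
    using R fin assms(6) by (auto intro!: PhiS_pos)
  have "kappa B g (GTot a phi T y R (I - R)) (PhiTot a phi R (I - R))
      = kappa B g (Tstar a phi T y I) (PhiS a phi I)"
    using GTot_Un[OF fin _ pos, of T y] PhiTot_Un[OF fin] Un by auto
  then show "LLR B g a phi T y R (I - R) =
             GTot a phi T y R (I - R) / PhiTot a phi R (I - R)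
               * Efun B g (GTot a phi T y R (I - R)) (mR a phi T y R (I - R)) (bR a phi R (I - R))
             + - kappa B g (Tstar a phi T y I) (PhiS a phi I)"
    using LLR_eq_Efun_minus_kappa[OF pos G0] by simp
qed

end
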